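(* Let $R\in\{\mathrm{ML},\mathrm{wML},\mathrm{C},\mathrm{S}\}$, let $\varphi$ be a precise forecasting system and let $[p,q]\in\mathscr I$ with $p<q$. If $\Omega_R(\varphi)=\Omega_R([p,q])$, then $\varphi$ is non-computable and non-stationary.
   Context: Notation: $\mathbb N=\{1,2,\dots\}$, $\mathbb N_0=\mathbb N\cup\{0\}$. $\Omega=\{0,1\}^{\mathbb N}$ is the set of paths $\omega=(\omega_1,\omega_2,\dots)$; $\omega_{1:n}=(\omega_1,\dots,\omega_n)$, $\omega_{1:0}=\square$. $\mathbb S=\bigcup_{n\in\mathbb N_0}\{0,1\}^n$ is the set of situations, $|s|$ the length, $sx$ concatenation. $\mathscr I$ is the set of closed intervals $I\subseteq[0,1]$. For $r\in[0,1]$ and $f:\{0,1\}\to\mathbb R$, $E_r(f)=rf(1)+(1-r)f(0)$; $\overline E_I(f)=\max_{r\in I}E_r(f)$. A forecasting system is a map $\varphi:\mathbb S\to\mathscr I$; $\underline\varphi(s)=\min\varphi(s)$, $\overline\varphi(s)=\max\varphi(s)$; it is precise if every $\varphi(s)$ is a singleton, stationary if constant (then identified with its value $I$). A real process is $F:\mathbb S\to\mathbb R$; $\Delta F(s)$ is $x\mapsto F(sx)-F(s)$. $M$ is a supermartingale for $\varphi$ if $\overline E_{\varphi(s)}(\Delta M(s))\le0$ for all $s$. A test process is a non-negative real process with $F(\square)=1$; a test supermartingale for $\varphi$ is a test process that is a supermartingale for $\varphi$. A multiplier process $D$ assigns to each $s$ a function $D(s):\{0,1\}\to[0,\infty)$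 and generates the test process $F(\square)=1$, $F(sx)=F(s)D(s)(x)$. Computability: maps from countable effectively encoded domains to $\mathbb N_0$ or $\mathbb Q$ are recursive if Turing-computable; a real map $r$ on a domain $\mathscr D$ is lower semicomputable if $r(d)=\lim_nq(d,n)$ for a recursive rational $q$ non-decreasing in $n$, computable if $|r(d)-q(d,n)|<2^{-n}$ for some recursive rational $q$. A forecasting system is computable if $\underline\varphi$ and $\overline\varphi$ are computable real maps on $\mathbb S$. $\mathscr F_{\mathrm{ML}}$: lower semicomputable test processes; $\mathscr F_{\mathrm{wML}}$: test processes generated by lower semicomputable multiplier processes; $\mathscr F_{\mathrm C}=\mathscr F_{\mathrm S}$: positive rational-valued recursive test processes. $\overline{\mathbb T}_R(\varphi)$: elements of $\mathscr F_R$ that are test supermartingales for $\varphi$. For $R\in\{\mathrm{ML},\mathrm{wML},\mathrm C\}$, $\omega$ is $R$-random for $\varphi$ if no $T\in\overline{\mathbb T}_R(\varphi)$ has $\limsup_nT(\omega_{1:n})=\infty$. A real growth function is a computable, non-decreasing, unbounded $\tau:\mathbb N_0\to[0,\infty)$; $\omega$ is S-random for $\varphi$ if there are no $T\in\overline{\mathbb T}_{\mathrm S}(\varphi)$ and real growth function $\tau$ with $\limsup_n[T(\omega_{1:n})-\tau(n)]\ge0$. $\Omega_R(\varphi)$ is the set of paths that are $R$-random for $\varphi$; for an interval $I$, $\Omega_R(I)$ refers to the stationary forecasting system with value $I$. *)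

theory Defs
  imports Complex_Main "HOL-Library.Nat_Bijection" "HOL-Library.Liminf_Limsup" "HOL-Library.Extended_Real"
begin

inductive recfn :: "nat \<Rightarrow> (nat list \<Rightarrow> nat) \<Rightarrow> bool" where
  rf_zero: "recfn n (\<lambda>_. 0)"
| rf_succ: "recfn 1 (\<lambda>xs. Suc (hd xs))"
| rf_proj: "i < n \<Longrightarrow> recfn n (\<lambda>xs. xs ! i)"
| rf_comp: "recfn m f \<Longrightarrow> length gs = m \<Longrightarrow> (\<forall>g\<in>set gs. recfn n g) \<Longrightarrow>
            recfn n (\<lambda>xs. f (map (\<lambda>g. g xs) gs))"
| rf_prim: "recfn n f \<Longrightarrow> recfn (Suc (Suc n)) g \<Longrightarrow>
            recfn (Suc n) (\<lambda>xs. rec_nat (f (tl xs)) (\<lambda>k r. g (k # r # tl xs)) (hd xs))"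
| rf_mu: "recfn (Suc n) g \<Longrightarrow> (\<forall>xs. length xs = n \<longrightarrow> (\<exists>y. g (y # xs) = 0)) \<Longrightarrow>
          recfn n (\<lambda>xs. LEAST y. g (y # xs) = 0)"

definition rat_code :: "nat \<Rightarrow> nat \<Rightarrow> nat \<Rightarrow> real" where
  "rat_code a b c = (real a - real b) / (real c + 1)"

type_synonym situation = "bool list"
type_synonym path = "nat \<Rightarrow> bool"

text \<open>omega_{1:n}; path component omega_k is omega (k-1).\<close>
definition prefix :: "path \<Rightarrow> nat \<Rightarrow> situation" where
  "prefix \<omega> n = map \<omega> [0..<n]"

definition enc_sit :: "situation \<Rightarrow> nat" where
  "enc_sit s = foldl (\<lambda>n b. 2 * n + (if b then 1 else 0)) 1 s"

definition enc_sit_bool :: "situation \<times> bool \<Rightarrow> nat" where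
  "enc_sit_bool p = prod_encode (enc_sit (fst p), (if snd p then 1 else 0))"

definition recursive_rat2 :: "('d \<Rightarrow> nat) \<Rightarrow> ('d \<Rightarrow> nat \<Rightarrow> real) \<Rightarrow> bool" where
  "recursive_rat2 enc q \<longleftrightarrow> (\<exists>a b c. recfn 2 a \<and> recfn 2 b \<and> recfn 2 c \<and>
      (\<forall>d n. q d n = rat_code (a [enc d, n]) (b [enc d, n]) (c [enc d, n])))"

definition recursive_rat :: "('d \<Rightarrow> nat) \<Rightarrow> ('d \<Rightarrow> real) \<Rightarrow> bool" where
  "recursive_rat enc q \<longleftrightarrow> (\<exists>a b c. recfn 1 a \<and> recfn 1 b \<and> recfn 1 c \<and>
      (\<forall>d. q d = rat_code (a [enc d]) (b [enc d]) (c [enc d])))"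

definition lower_semicomputable :: "('d \<Rightarrow> nat) \<Rightarrow> ('d \<Rightarrow> real) \<Rightarrow> bool" where
  "lower_semicomputable enc r \<longleftrightarrow> (\<exists>q. recursive_rat2 enc q \<and>
      (\<forall>d. mono (q d) \<and> (q d \<longlonglongrightarrow> r d)))"

definition computable_real :: "('d \<Rightarrow> nat) \<Rightarrow> ('d \<Rightarrow> real) \<Rightarrow> bool" where
  "computable_real enc r \<longleftrightarrow> (\<exists>q. recursive_rat2 enc q \<and>
      (\<forall>d n. \<bar>r d - q d n\<bar> < 2 powr (- real n)))"

type_synonym fsys = "situation \<Rightarrow> real set"

definition forecasting_system :: "fsys \<Rightarrow> bool" where
  "forecasting_system \<phi> \<longleftrightarrow> (\<forall>s. \<exists>a b. 0 \<le> a \<and> a \<le> b \<and> b \<le> 1 \<and> \<phi> s = {a..b})"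

definition lower_fs :: "fsys \<Rightarrow> situation \<Rightarrow> real" where
  "lower_fs \<phi> s = Inf (\<phi> s)"

definition upper_fs :: "fsys \<Rightarrow> situation \<Rightarrow> real" where
  "upper_fs \<phi> s = Sup (\<phi> s)"

definition precise :: "fsys \<Rightarrow> bool" where
  "precise \<phi> \<longleftrightarrow> (\<forall>s. \<exists>r. \<phi> s = {r})"

definition stationary :: "fsys \<Rightarrow> bool" where
  "stationary \<phi> \<longleftrightarrow> (\<exists>I. \<forall>s. \<phi> s = I)"

definition computable_fs :: "fsys \<Rightarrow> bool" where
  "computable_fs \<phi> \<longleftrightarrow> computable_real enc_sit (lower_fs \<phi>) \<and> computable_real enc_sit (upper_fs \<phi>)"

definition E_r :: "real \<Rightarrow> (bool \<Rightarrow> real) \<Rightarrow> real" where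
  "E_r r f = r * f True + (1 - r) * f False"

definition upper_E :: "real set \<Rightarrow> (bool \<Rightarrow> real) \<Rightarrow> real" where
  "upper_E I f = (SUP r\<in>I. E_r r f)"

definition supermartingale :: "fsys \<Rightarrow> (situation \<Rightarrow> real) \<Rightarrow> bool" where
  "supermartingale \<phi> M \<longleftrightarrow> (\<forall>s. upper_E (\<phi> s) (\<lambda>x. M (s @ [x]) - M s) \<le> 0)"

definition test_process :: "(situation \<Rightarrow> real) \<Rightarrow> bool" where
  "test_process F \<longleftrightarrow> (\<forall>s. 0 \<le> F s) \<and> F [] = 1"

definition generated :: "(situation \<Rightarrow> bool \<Rightarrow> real) \<Rightarrow> situation \<Rightarrow> real" where
  "generated D s = (\<Prod>i<length s. D (take i s) (s ! i))"

datatype rnotion = R_ML | R_wML | R_C | R_S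

definition F_class :: "rnotion \<Rightarrow> (situation \<Rightarrow> real) set" where
  "F_class R = (case R of
      R_ML \<Rightarrow> {F. test_process F \<and> lower_semicomputable enc_sit F}
    | R_wML \<Rightarrow> {F. \<exists>D. (\<forall>s x. 0 \<le> D s x) \<and>
                    lower_semicomputable enc_sit_bool (\<lambda>p. D (fst p) (snd p)) \<and> F = generated D}
    | R_C \<Rightarrow> {F. test_process F \<and> (\<forall>s. 0 < F s) \<and> recursive_rat enc_sit F}
    | R_S \<Rightarrow> {F. test_process F \<and> (\<forall>s. 0 < F s) \<and> recursive_rat enc_sit F})"

definition test_supermartingales :: "rnotion \<Rightarrow> fsys \<Rightarrow> (situation \<Rightarrow> real) set" where
  "test_supermartingales R \<phi> = {T \<in> F_class R. test_process T \<and> supermartingale \<phi> T}"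

definition real_growth_function :: "(nat \<Rightarrow> real) \<Rightarrow> bool" where
  "real_growth_function \<tau> \<longleftrightarrow> computable_real id \<tau> \<and> mono \<tau> \<and> (\<forall>n. 0 \<le> \<tau> n) \<and>
      \<not> bdd_above (range \<tau>)"

definition random :: "rnotion \<Rightarrow> fsys \<Rightarrow> path \<Rightarrow> bool" where
  "random R \<phi> \<omega> = (if R = R_S then
      \<not> (\<exists>T \<in> test_supermartingales R_S \<phi>. \<exists>\<tau>. real_growth_function \<tau> \<and>
            limsup (\<lambda>n. ereal (T (prefix \<omega> n) - \<tau> n)) \<ge> 0)
    else
      \<not> (\<exists>T \<in> test_supermartingales R \<phi>. limsup (\<lambda>n. ereal (T (prefix \<omega> n))) = \<infinity>))"

definition Omega_R :: "rnotion \<Rightarrow> fsys \<Rightarrow> path set" where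
  "Omega_R R \<phi> = {\<omega>. random R \<phi> \<omega>}"

end

theory Submission
  imports Defs "HOL-Library.Countable_Set"
begin

(* Suppose the precise forecasting system phi had the same random paths as the interval [p,q],
   and fix rational levels p < l1 < l2 < u2 < u1 < q. If phi is computable or stationary, a recursive
   test tells in every situation s either phi(s) >= l2 or phi(s) <= u2. Betting against the outcome
   predicted by this answer, with the likelihood ratio that moves l2 to l1 (resp. u2 to u1), gives a
   recursive test supermartingale S for phi. The forecast psi(s) in {p, q} on the far side of the bet
   makes 1/S shrink geometrically in expectation, so theta^(-n) / S is a psi-supermartingale for
   some theta < 1. Mixing it with all (countably many) test supermartingales for [p,q] and following a
   path along which the mixture does not increase yields a path that is random for [p,q] but on
   which S grows exponentially, so the path is not random for phi. *)

section \<open>Recursive functions\<close>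

datatype rexp = RZero | RSucc | RProj nat | RComp rexp "rexp list" | RPrim rexp rexp | RMu rexp

instance rexp :: countable by countable_datatype

fun rexp_fun :: "rexp \<Rightarrow> nat list \<Rightarrow> nat" where
  "rexp_fun RZero = (\<lambda>_. 0)"
| "rexp_fun RSucc = (\<lambda>xs. Suc (hd xs))"
| "rexp_fun (RProj i) = (\<lambda>xs. xs ! i)"
| "rexp_fun (RComp f gs) = (\<lambda>xs. rexp_fun f (map (\<lambda>g. rexp_fun g xs) gs))"
| "rexp_fun (RPrim f g) =
     (\<lambda>xs. rec_nat (rexp_fun f (tl xs)) (\<lambda>k r. rexp_fun g (k # r # tl xs)) (hd xs))"
| "rexp_fun (RMu g) = (\<lambda>xs. LEAST y. rexp_fun g (y # xs) = 0)"

lemma recfn_eq_rexp_fun: "recfn n f \<Longrightarrow> \<exists>e. f = rexp_fun e"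
proof (induction rule: recfn.induct)
  case (rf_comp m f gs n)
  obtain ef where "f = rexp_fun ef" using rf_comp.IH by blast
  moreover obtain eg where "\<forall>g\<in>set gs. g = rexp_fun (eg g)" using rf_comp.IH by metis
  ultimately have "(\<lambda>xs. f (map (\<lambda>g. g xs) gs)) = rexp_fun (RComp ef (map eg gs))"
    by (auto simp: comp_def fun_eq_iff cong: map_cong)
  then show ?case by blast
next
  case (rf_prim n f g)
  then obtain ef eg where "f = rexp_fun ef" "g = rexp_fun eg" by blast
  then show ?case by (intro exI[of _ "RPrim ef eg"]) simp
next
  case (rf_mu n g)
  then obtain eg where "g = rexp_fun eg" by blast
  then show ?case by (intro exI[of _ "RMu eg"]) simp
qed (metis rexp_fun.simps(1), metis rexp_fun.simps(2), metis rexp_fun.simps(3))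

lemma countable_recfn: "countable {f. \<exists>n. recfn n f}"
  by (rule countable_subset[of _ "range rexp_fun"]) (auto dest: recfn_eq_rexp_fun)

definition recursive :: "nat \<Rightarrow> (nat list \<Rightarrow> nat) \<Rightarrow> bool" where
  "recursive n F \<longleftrightarrow> (\<exists>f. recfn n f \<and> (\<forall>xs. length xs = n \<longrightarrow> f xs = F xs))"

lemma recursive_cong:
  "recursive n F \<Longrightarrow> (\<And>xs. length xs = n \<Longrightarrow> F xs = G xs) \<Longrightarrow> recursive n G"
  by (auto simp: recursive_def)

lemma recursive_proj: "i < n \<Longrightarrow> recursive n (\<lambda>xs. xs ! i)"
  using rf_proj by (auto simp: recursive_def)

lemma recursive_comp:
  assumes "recursive m F" "length Gs = m" "\<forall>G\<in>set Gs. recursive n G"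
  shows "recursive n (\<lambda>xs. F (map (\<lambda>G. G xs) Gs))"
proof -
  obtain f where f: "recfn m f" "\<forall>xs. length xs = m \<longrightarrow> f xs = F xs"
    using assms(1) by (auto simp: recursive_def)
  obtain g where g: "\<forall>G\<in>set Gs. recfn n (g G) \<and> (\<forall>xs. length xs = n \<longrightarrow> g G xs = G xs)"
    using assms(3) unfolding recursive_def by metis
  have "recfn n (\<lambda>xs. f (map (\<lambda>h. h xs) (map g Gs)))"
    using f(1) assms(2) g by (intro rf_comp) auto
  moreover have "f (map (\<lambda>h. h xs) (map g Gs)) = F (map (\<lambda>G. G xs) Gs)" if "length xs = n" for xs
    using f(2) assms(2) g that by (simp add: comp_def cong: map_cong)
  ultimately show ?thesis by (auto simp: recursive_def)
qed

lemma recursive_comp1: "recursive 1 F \<Longrightarrow> recursive n G \<Longrightarrow> recursive n (\<lambda>xs. F [G xs])"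
  using recursive_comp[of 1 F "[G]" n] by simp

lemma recursive_comp2:
  "recursive 2 F \<Longrightarrow> recursive n G \<Longrightarrow> recursive n H \<Longrightarrow> recursive n (\<lambda>xs. F [G xs, H xs])"
  using recursive_comp[of 2 F "[G, H]" n] by simp

lemma recursive_prim:
  assumes "recursive n F" "recursive (Suc (Suc n)) G"
  shows "recursive (Suc n) (\<lambda>xs. rec_nat (F (tl xs)) (\<lambda>k r. G (k # r # tl xs)) (hd xs))"
proof -
  obtain f where f: "recfn n f" "\<forall>xs. length xs = n \<longrightarrow> f xs = F xs"
    using assms(1) by (auto simp: recursive_def)
  obtain g where g: "recfn (Suc (Suc n)) g" "\<forall>xs. length xs = Suc (Suc n) \<longrightarrow> g xs = G xs"
    using assms(2) by (auto simp: recursive_def)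
  have "rec_nat (f (tl xs)) (\<lambda>k r. g (k # r # tl xs)) (hd xs)
      = rec_nat (F (tl xs)) (\<lambda>k r. G (k # r # tl xs)) (hd xs)" if "length xs = Suc n" for xs
    using f(2) g(2) that by simp
  then show ?thesis using rf_prim[OF f(1) g(1)] by (auto simp: recursive_def)
qed

lemma recursive_mu:
  assumes "recursive (Suc n) G" "\<And>xs. length xs = n \<Longrightarrow> \<exists>y. G (y # xs) = 0"
  shows "recursive n (\<lambda>xs. LEAST y. G (y # xs) = 0)"
proof -
  obtain g where g: "recfn (Suc n) g" "\<forall>xs. length xs = Suc n \<longrightarrow> g xs = G xs"
    using assms(1) by (auto simp: recursive_def)
  have "recfn n (\<lambda>xs. LEAST y. g (y # xs) = 0)"
    using g assms(2) by (intro rf_mu) auto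
  then show ?thesis using g(2) by (auto simp: recursive_def)
qed

lemma length_2_conv: "length xs = 2 \<longleftrightarrow> (\<exists>a b. xs = [a, b])"
  by (cases xs; cases "tl xs") auto

lemma recursive_rec_nat:
  assumes "recursive 1 (\<lambda>xs. F (xs ! 0))" "recursive 3 (\<lambda>xs. G (xs ! 0) (xs ! 1) (xs ! 2))"
  shows "recursive 2 (\<lambda>xs. rec_nat (F (xs ! 1)) (\<lambda>k r. G k r (xs ! 1)) (xs ! 0))"
proof -
  have "recursive 2 (\<lambda>xs. rec_nat (F (tl xs ! 0)) (\<lambda>k r. G k r (tl xs ! 0)) (hd xs))"
    using assms recursive_prim[of 1 "\<lambda>xs. F (xs ! 0)" "\<lambda>xs. G (xs ! 0) (xs ! 1) (xs ! 2)"]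
    by (simp add: numeral_3_eq_3 numeral_2_eq_2)
  then show ?thesis by (rule recursive_cong) (auto simp: length_2_conv)
qed

lemma recursive_Suc:
  assumes "recursive n F"
  shows "recursive n (\<lambda>xs. Suc (F xs))"
proof -
  have "recursive 1 (\<lambda>xs. Suc (hd xs))" using rf_succ by (auto simp: recursive_def)
  from recursive_comp1[OF this assms] show ?thesis by simp
qed

lemma recursive_const: "recursive n (\<lambda>_. k)"
proof (induction k)
  case 0
  show ?case using rf_zero by (auto simp: recursive_def)
qed (rule recursive_Suc)

lemma recursive_add:
  assumes "recursive n F" "recursive n G"
  shows "recursive n (\<lambda>xs. F xs + G xs)"
proof -
  have "recursive 2 (\<lambda>xs. rec_nat (xs ! 1) (\<lambda>k r. Suc r) (xs ! 0))"
    by (intro recursive_rec_nat recursive_Suc recursive_proj) auto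
  moreover have "rec_nat b (\<lambda>k r. Suc r) a = a + b" for a b by (induction a) auto
  ultimately have "recursive 2 (\<lambda>xs. xs ! 0 + xs ! 1)" by simp
  from recursive_comp2[OF this assms] show ?thesis by simp
qed

lemma recursive_mult:
  assumes "recursive n F" "recursive n G"
  shows "recursive n (\<lambda>xs. F xs * G xs)"
proof -
  have "recursive 2 (\<lambda>xs. rec_nat 0 (\<lambda>k r. r + xs ! 1) (xs ! 0))"
    by (intro recursive_rec_nat recursive_add recursive_const recursive_proj) auto
  moreover have "rec_nat 0 (\<lambda>k r. r + b) a = a * b" for a b :: nat by (induction a) auto
  ultimately have "recursive 2 (\<lambda>xs. xs ! 0 * xs ! 1)" by simp
  from recursive_comp2[OF this assms] show ?thesis by simp
qed

lemma recursive_diff: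
  assumes "recursive n F" "recursive n G"
  shows "recursive n (\<lambda>xs. F xs - G xs)"
proof -
  have "recursive 2 (\<lambda>xs. rec_nat 0 (\<lambda>k r. k) (xs ! 0))"
    by (intro recursive_rec_nat recursive_const recursive_proj) auto
  moreover have "rec_nat 0 (\<lambda>k r. k) a = a - 1" for a :: nat by (cases a) auto
  ultimately have "recursive 2 (\<lambda>xs. xs ! 0 - 1)" by simp
  from recursive_comp2[OF this recursive_proj recursive_proj, of 1 3 1]
  have "recursive 3 (\<lambda>xs. xs ! 1 - 1)" by simp
  then have "recursive 2 (\<lambda>xs. rec_nat (xs ! 1) (\<lambda>k r. r - 1) (xs ! 0))"
    by (intro recursive_rec_nat recursive_proj) auto
  moreover have "rec_nat b (\<lambda>k r. r - 1) a = b - a" for a b :: nat by (induction a) auto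
  ultimately have "recursive 2 (\<lambda>xs. xs ! 1 - xs ! 0)" by simp
  from recursive_comp2[OF this assms(2,1)] show ?thesis by simp
qed

lemma recursive_if_zero:
  assumes "recursive n T" "recursive n X" "recursive n Y"
  shows "recursive n (\<lambda>xs. if T xs = 0 then X xs else Y xs)"
proof -
  have "recursive n (\<lambda>xs. (1 - T xs) * X xs + (1 - (1 - T xs)) * Y xs)"
    by (intro recursive_add recursive_mult recursive_diff recursive_const assms)
  then show ?thesis by (rule recursive_cong) auto
qed

lemma recursive_if_le:
  assumes "recursive n A" "recursive n B" "recursive n X" "recursive n Y"
  shows "recursive n (\<lambda>xs. if A xs \<le> B xs then X xs else Y xs)"
  using recursive_if_zero[OF recursive_diff[OF assms(1,2)] assms(3,4)] by (rule recursive_cong) auto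

lemma recursive_div2:
  assumes "recursive n F"
  shows "recursive n (\<lambda>xs. F xs div 2)"
proof -
  have "recursive (Suc 1) (\<lambda>ys. Suc (ys ! 1) - (2 * ys ! 0 + 2))"
    by (intro recursive_diff recursive_Suc recursive_add recursive_mult recursive_const recursive_proj) auto
  then have "recursive 1 (\<lambda>xs. LEAST y. Suc ((y # xs) ! 1) - (2 * (y # xs) ! 0 + 2) = 0)"
    by (rule recursive_mu) (simp, presburger)
  moreover have "(LEAST y. Suc a - (2 * y + 2) = 0) = a div 2" for a :: nat
    by (rule Least_equality) linarith+
  ultimately have "recursive 1 (\<lambda>xs. xs ! 0 div 2)" by simp
  from recursive_comp1[OF this assms] show ?thesis by simp
qed

lemma recursive_mod2:
  assumes "recursive n F"
  shows "recursive n (\<lambda>xs. F xs mod 2)"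
proof -
  have "recursive n (\<lambda>xs. F xs - 2 * (F xs div 2))"
    by (intro recursive_diff recursive_mult recursive_div2 recursive_const assms)
  then show ?thesis by (simp add: minus_mult_div_eq_mod)
qed

lemma recursive_div_power2:
  assumes "recursive n F" "recursive n I"
  shows "recursive n (\<lambda>xs. F xs div 2 ^ I xs)"
proof -
  have "recursive 2 (\<lambda>xs. rec_nat (xs ! 1) (\<lambda>k r. r div 2) (xs ! 0))"
    by (intro recursive_rec_nat recursive_div2 recursive_proj) auto
  moreover have "rec_nat a (\<lambda>k r. r div 2) i = a div 2 ^ i" for a i :: nat
    by (induction i) (simp_all add: div_mult2_eq[symmetric] mult.commute)
  ultimately have "recursive 2 (\<lambda>xs. xs ! 1 div 2 ^ xs ! 0)" by simp
  from recursive_comp2[OF this assms(2,1)] show ?thesis by simp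
qed

lemma recursive_prod:
  assumes "recursive 2 (\<lambda>xs. H (xs ! 0) (xs ! 1))"
  shows "recursive 2 (\<lambda>xs. \<Prod>i<xs ! 0. H i (xs ! 1))"
proof -
  have "recursive 3 (\<lambda>xs. H (xs ! 0) (xs ! 2))"
    using recursive_comp2[OF assms recursive_proj recursive_proj, of 0 3 2] by simp
  then have "recursive 2 (\<lambda>xs. rec_nat 1 (\<lambda>k r. r * H k (xs ! 1)) (xs ! 0))"
    by (intro recursive_rec_nat recursive_mult recursive_const recursive_proj) auto
  moreover have "rec_nat 1 (\<lambda>k r. r * H k b) a = (\<Prod>i<a. H i b)" for a b
    by (induction a) auto
  ultimately show ?thesis by simp
qed

lemma prod_decode_eq_triangle:
  assumes "t = (LEAST t. w < triangle (Suc t))"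
  shows "prod_decode w = (w - triangle t, t - (w - triangle t))"
proof -
  have "w < triangle (Suc w)" by (induction w) auto
  then have upper: "w < triangle (Suc t)" unfolding assms by (rule LeastI)
  have lower: "triangle t \<le> w"
  proof (cases t)
    case (Suc t')
    then have "\<not> w < triangle (Suc t')" using assms by (metis lessI not_less_Least)
    then show ?thesis using Suc by simp
  qed simp
  define m where "m = w - triangle t"
  have "w = triangle t + m" "m \<le> t" using upper lower by (auto simp: m_def)
  then show ?thesis by (metis prod_decode_aux.simps prod_decode_triangle_add m_def)
qed

lemma recursive_prod_decode:
  assumes "recursive n F"
  shows "recursive n (\<lambda>xs. fst (prod_decode (F xs)))" "recursive n (\<lambda>xs. snd (prod_decode (F xs)))"
proof -
  have "recursive (Suc 1) (\<lambda>ys. Suc (ys ! 1) - triangle (Suc (ys ! 0)))"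
    unfolding triangle_def
    by (intro recursive_diff recursive_Suc recursive_div2 recursive_mult recursive_proj) auto
  moreover have "Suc a - triangle (Suc a) = 0" for a by (induction a) auto
  ultimately have "recursive 1 (\<lambda>xs. LEAST t. Suc ((t # xs) ! 1) - triangle (Suc ((t # xs) ! 0)) = 0)"
    by (intro recursive_mu) (simp_all del: triangle_Suc, blast)
  then have level: "recursive 1 (\<lambda>xs. LEAST t. xs ! 0 < triangle (Suc t))"
    by (simp add: Suc_le_eq del: triangle_Suc)
  let ?t = "\<lambda>xs. LEAST t. F xs < triangle (Suc t)"
  have t: "recursive n ?t" using recursive_comp1[OF level assms] by simp
  have "recursive 1 (\<lambda>xs. triangle (xs ! 0))"
    unfolding triangle_def by (intro recursive_div2 recursive_mult recursive_Suc recursive_proj) auto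
  from recursive_comp1[OF this t] have tri: "recursive n (\<lambda>xs. triangle (?t xs))" by simp
  show "recursive n (\<lambda>xs. fst (prod_decode (F xs)))"
    using recursive_diff[OF assms tri] by (simp add: prod_decode_eq_triangle)
  show "recursive n (\<lambda>xs. snd (prod_decode (F xs)))"
    using recursive_diff[OF t recursive_diff[OF assms tri]] by (simp add: prod_decode_eq_triangle)
qed

lemma enc_sit_Nil [simp]: "enc_sit [] = 1"
  by (simp add: enc_sit_def)

lemma enc_sit_snoc: "enc_sit (s @ [x]) = 2 * enc_sit s + of_bool x"
  by (simp add: enc_sit_def)

lemma length_less_enc_sit: "length s < enc_sit s"
  by (induction s rule: rev_induct) (auto simp: enc_sit_snoc)

(* Below its leading 1, the binary digits of enc_sit s are the outcomes of s, the last one lowest;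
   e div 2 ^ Suc i codes the situation before the last Suc i outcomes. *)
definition sit_prod :: "(nat \<Rightarrow> nat \<Rightarrow> nat) \<Rightarrow> nat \<Rightarrow> nat" where
  "sit_prod \<Phi> e = (\<Prod>i<e. if e div 2 ^ Suc i = 0 then 1 else \<Phi> (e div 2 ^ Suc i) (e div 2 ^ i mod 2))"

lemma sit_prod_enc_sit:
  "sit_prod \<Phi> (enc_sit s) = (\<Prod>j<length s. \<Phi> (enc_sit (take j s)) (of_bool (s ! j)))"
proof -
  let ?P = "\<lambda>L e. \<Prod>i<L. if e div 2 ^ Suc i = 0 then 1 else \<Phi> (e div 2 ^ Suc i) (e div 2 ^ i mod 2)"
  have "?P L (enc_sit s) = (\<Prod>j<length s. \<Phi> (enc_sit (take j s)) (of_bool (s ! j)))"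
    if "length s \<le> L" for L
    using that
  proof (induction s arbitrary: L rule: rev_induct)
    case Nil
    have "(1::nat) < 2 * 2 ^ i" for i :: nat by (induction i) auto
    then show ?case by simp
  next
    case (snoc x s)
    then obtain L' where L: "L = Suc L'" "length s \<le> L'" by (cases L) auto
    have "enc_sit (s @ [x]) div 2 = enc_sit s" by (simp add: enc_sit_snoc)
    then have shift: "enc_sit (s @ [x]) div 2 ^ Suc i = enc_sit s div 2 ^ i" for i
      by (simp add: div_mult2_eq)
    have last: "enc_sit (s @ [x]) mod 2 = of_bool x" by (simp add: enc_sit_snoc)
    have "enc_sit s \<noteq> 0" using length_less_enc_sit[of s] by simp
    then have "?P L (enc_sit (s @ [x])) = \<Phi> (enc_sit s) (of_bool x) * ?P L' (enc_sit s)"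
      unfolding L(1) prod.lessThan_Suc_shift shift power_0 div_by_1 last by simp
    also have "\<dots> = (\<Prod>j<length (s @ [x]). \<Phi> (enc_sit (take j (s @ [x]))) (of_bool ((s @ [x]) ! j)))"
      using snoc.IH[OF L(2)] by (simp add: nth_append mult.commute)
    finally show ?case .
  qed
  then show ?thesis using length_less_enc_sit[of s] by (simp add: sit_prod_def)
qed

lemma recursive_sit_prod:
  assumes "recursive 2 (\<lambda>xs. \<Phi> (xs ! 0) (xs ! 1))"
  shows "recursive 1 (\<lambda>xs. sit_prod \<Phi> (xs ! 0))"
proof -
  have "recursive 2 (\<lambda>xs. if xs ! 1 div 2 ^ Suc (xs ! 0) = 0 then 1
      else \<Phi> (xs ! 1 div 2 ^ Suc (xs ! 0)) (xs ! 1 div 2 ^ (xs ! 0) mod 2))"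
    by (intro recursive_if_zero recursive_const recursive_div_power2 recursive_Suc recursive_mod2
        recursive_proj recursive_comp2[OF assms, of 2, simplified]) auto
  moreover have "recursive 1 (\<lambda>xs. xs ! 0)" by (rule recursive_proj) simp
  ultimately have "recursive 1 (\<lambda>xs. (\<lambda>ys. \<Prod>i<ys ! 0. if ys ! 1 div 2 ^ Suc i = 0 then 1
      else \<Phi> (ys ! 1 div 2 ^ Suc i) (ys ! 1 div 2 ^ i mod 2)) [xs ! 0, xs ! 0])"
    by (intro recursive_comp2 recursive_prod)
  then show ?thesis by (rule recursive_cong) (simp add: sit_prod_def cong: if_cong)
qed

section \<open>Computable rationals and countability of the test classes\<close>

lemma recursive_rat_quotient:
  assumes "recursive 1 (\<lambda>xs. A (xs ! 0))" "recursive 1 (\<lambda>xs. B (xs ! 0))" "\<And>e. 0 < B e"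
  shows "recursive_rat enc (\<lambda>d. real (A (enc d)) / real (B (enc d)))"
proof -
  obtain a where a: "recfn 1 a" "\<forall>xs. length xs = 1 \<longrightarrow> a xs = A (xs ! 0)"
    using assms(1) by (auto simp: recursive_def)
  obtain c where c: "recfn 1 c" "\<forall>xs. length xs = 1 \<longrightarrow> c xs = B (xs ! 0) - 1"
    using recursive_diff[OF assms(2) recursive_const] by (auto simp: recursive_def)
  have "\<forall>d. real (A (enc d)) / real (B (enc d)) = rat_code (a [enc d]) ((\<lambda>_. 0) [enc d]) (c [enc d])"
    using a c assms(3) by (simp add: rat_code_def of_nat_diff Suc_le_eq)
  with a(1) c(1) rf_zero show ?thesis unfolding recursive_rat_def by blast
qed

lemma recursive_rat2_quotient:
  assumes "recursive 1 (\<lambda>xs. A (xs ! 0))" "recursive 1 (\<lambda>xs. B (xs ! 0))" "\<And>e. 0 < B e"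
  shows "recursive_rat2 enc (\<lambda>d n. real (A (enc d)) / real (B (enc d)))"
proof -
  have proj: "recursive 2 (\<lambda>xs. xs ! 0)" by (rule recursive_proj) simp
  obtain a where a: "recfn 2 a" "\<forall>xs. length xs = 2 \<longrightarrow> a xs = A (xs ! 0)"
    using recursive_comp1[OF assms(1) proj] by (auto simp: recursive_def)
  obtain c where c: "recfn 2 c" "\<forall>xs. length xs = 2 \<longrightarrow> c xs = B (xs ! 0) - 1"
    using recursive_diff[OF recursive_comp1[OF assms(2) proj] recursive_const] by (auto simp: recursive_def)
  have "\<forall>d n. real (A (enc d)) / real (B (enc d)) =
      rat_code (a [enc d, n]) ((\<lambda>_. 0) [enc d, n]) (c [enc d, n])"
    using a c assms(3) by (simp add: rat_code_def of_nat_diff Suc_le_eq)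
  with a(1) c(1) rf_zero show ?thesis unfolding recursive_rat2_def by blast
qed

lemma lower_semicomputable_quotient:
  assumes "recursive 1 (\<lambda>xs. A (xs ! 0))" "recursive 1 (\<lambda>xs. B (xs ! 0))" "\<And>e. 0 < B e"
  shows "lower_semicomputable enc (\<lambda>d. real (A (enc d)) / real (B (enc d)))"
  unfolding lower_semicomputable_def
  using recursive_rat2_quotient[OF assms] by (intro exI[of _ "\<lambda>d n. real (A (enc d)) / real (B (enc d))"]) auto

lemma countable_recursive_rat2: "countable {q. recursive_rat2 enc q}"
proof -
  let ?RF = "{f. \<exists>n. recfn n f}"
  have "{q. recursive_rat2 enc q} \<subseteq>
      (\<lambda>(a, b, c) d n. rat_code (a [enc d, n]) (b [enc d, n]) (c [enc d, n])) ` (?RF \<times> ?RF \<times> ?RF)"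
    unfolding recursive_rat2_def by (force simp: fun_eq_iff)
  then show ?thesis by (rule countable_subset) (intro countable_image countable_SIGMA countable_recfn)
qed

lemma countable_recursive_rat: "countable {q. recursive_rat enc q}"
proof -
  let ?RF = "{f. \<exists>n. recfn n f}"
  have "{q. recursive_rat enc q} \<subseteq>
      (\<lambda>(a, b, c) d. rat_code (a [enc d]) (b [enc d]) (c [enc d])) ` (?RF \<times> ?RF \<times> ?RF)"
    unfolding recursive_rat_def by (force simp: fun_eq_iff)
  then show ?thesis by (rule countable_subset) (intro countable_image countable_SIGMA countable_recfn)
qed

lemma countable_lower_semicomputable: "countable {r. lower_semicomputable enc r}"
proof -
  have "{r. lower_semicomputable enc r} \<subseteq> (\<lambda>q d. lim (q d)) ` {q. recursive_rat2 enc q}"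
  proof
    fix r assume "r \<in> {r. lower_semicomputable enc r}"
    then obtain q where "recursive_rat2 enc q" "\<And>d. q d \<longlonglongrightarrow> r d"
      by (auto simp: lower_semicomputable_def)
    moreover from this(2) have "r = (\<lambda>d. lim (q d))" by (intro ext) (metis limI)
    ultimately show "r \<in> (\<lambda>q d. lim (q d)) ` {q. recursive_rat2 enc q}" by blast
  qed
  then show ?thesis by (rule countable_subset) (intro countable_image countable_recursive_rat2)
qed

lemma countable_F_class: "countable (F_class R)"
proof (cases R)
  case R_wML
  have "F_class R \<subseteq> (\<lambda>h. generated (\<lambda>s x. h (s, x))) ` {h. lower_semicomputable enc_sit_bool h}"
    using R_wML by (force simp: F_class_def)
  then show ?thesis by (rule countable_subset) (intro countable_image countable_lower_semicomputable)
qed (auto simp: F_class_def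
      intro: countable_subset[OF _ countable_lower_semicomputable] countable_subset[OF _ countable_recursive_rat])

lemma countable_test_supermartingales: "countable (test_supermartingales R \<phi>)"
  by (rule countable_subset[OF _ countable_F_class[of R]]) (auto simp: test_supermartingales_def)

section \<open>Supermartingales and randomness\<close>

lemma E_r_le_upper_E:
  assumes "0 \<le> p" "q \<le> 1" "r \<in> {p..q}"
  shows "E_r r f \<le> upper_E {p..q} f"
  unfolding upper_E_def
proof (rule cSUP_upper[OF assms(3)])
  have "E_r r f \<le> \<bar>f True\<bar> + \<bar>f False\<bar>" if "0 \<le> r" "r \<le> 1" for r
  proof -
    have "r * f True \<le> r * \<bar>f True\<bar>" "(1 - r) * f False \<le> (1 - r) * \<bar>f False\<bar>"
      using that by (intro mult_left_mono; simp)+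
    moreover have "r * \<bar>f True\<bar> \<le> \<bar>f True\<bar>" "(1 - r) * \<bar>f False\<bar> \<le> \<bar>f False\<bar>"
      using that by (intro mult_left_le_one_le; simp)+
    ultimately show ?thesis by (simp add: E_r_def)
  qed
  then show "bdd_above ((\<lambda>r. E_r r f) ` {p..q})"
    using assms(1,2) by (intro bdd_aboveI2[of _ _ "\<bar>f True\<bar> + \<bar>f False\<bar>"]) auto
qed

lemma E_r_minus_const: "E_r r (\<lambda>x. f x - c) = E_r r f - c"
  by (simp add: E_r_def algebra_simps)

lemma supermartingale_intervalD:
  assumes "supermartingale (\<lambda>_. {p..q}) T" "0 \<le> p" "q \<le> 1" "r \<in> {p..q}"
  shows "E_r r (\<lambda>x. T (s @ [x])) \<le> T s"
proof -
  have "E_r r (\<lambda>x. T (s @ [x]) - T s) \<le> upper_E {p..q} (\<lambda>x. T (s @ [x]) - T s)"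
    by (rule E_r_le_upper_E[OF assms(2-4)])
  also have "\<dots> \<le> 0" using assms(1) by (auto simp: supermartingale_def)
  finally show ?thesis by (simp add: E_r_minus_const)
qed

lemma supermartingale_precise_iff:
  assumes "\<And>s. \<phi> s = {r s}"
  shows "supermartingale \<phi> T \<longleftrightarrow> (\<forall>s. E_r (r s) (\<lambda>x. T (s @ [x])) \<le> T s)"
  by (simp add: supermartingale_def upper_E_def assms E_r_minus_const)

lemma ex_le_E_r:
  assumes "0 \<le> r" "r \<le> 1"
  shows "\<exists>x. f x \<le> E_r r f"
proof (cases "f True \<le> f False")
  case True
  then have "(1 - r) * f True \<le> (1 - r) * f False" using assms by (intro mult_left_mono) auto
  then have "f True \<le> E_r r f" by (simp add: E_r_def algebra_simps)
  then show ?thesis ..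
next
  case False
  then have "r * f False \<le> r * f True" using assms by (intro mult_left_mono) auto
  then have "f False \<le> E_r r f" by (simp add: E_r_def algebra_simps)
  then show ?thesis ..
qed

lemma E_r_pos:
  assumes "0 \<le> r" "r \<le> 1" "\<And>x. 0 < f x"
  shows "0 < E_r r f"
proof (cases "r = 0")
  case False
  then have "0 < r * f True" "0 \<le> (1 - r) * f False" using assms by (simp_all add: less_imp_le)
  then show ?thesis by (simp add: E_r_def)
qed (simp add: E_r_def assms)

lemma prefix_0 [simp]: "prefix \<omega> 0 = []"
  by (simp add: prefix_def)

lemma prefix_Suc: "prefix \<omega> (Suc n) = prefix \<omega> n @ [\<omega> n]"
  by (simp add: prefix_def)

lemma length_prefix [simp]: "length (prefix \<omega> n) = n"
  by (simp add: prefix_def)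

lemma exists_path_nonincreasing:
  fixes G :: "situation \<Rightarrow> real"
  assumes "\<And>s. \<exists>x. G (s @ [x]) \<le> G s"
  obtains \<omega> where "\<And>n. G (prefix \<omega> n) \<le> G []"
proof -
  obtain next_step where step: "\<And>s. G (s @ [next_step s]) \<le> G s" using assms by metis
  define walk where "walk n = rec_nat [] (\<lambda>_ s. s @ [next_step s]) n" for n
  define \<omega> where "\<omega> n = next_step (walk n)" for n
  have walk: "prefix \<omega> n = walk n" for n
    by (induction n) (simp_all add: prefix_Suc walk_def \<omega>_def)
  have "G (walk n) \<le> G []" for n
  proof (induction n)
    case (Suc n)
    have "G (walk (Suc n)) \<le> G (walk n)" using step by (simp add: walk_def)
    then show ?case using Suc.IH by linarith
  qed (simp add: walk_def)
  then show thesis using that walk by metis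
qed

lemma supermartingale_interval_le_power:
  fixes T :: "situation \<Rightarrow> real"
  assumes "0 \<le> p" "p < q" "q \<le> 1" "\<And>s. 0 \<le> T s"
    and sm: "\<And>s r. r \<in> {p..q} \<Longrightarrow> E_r r (\<lambda>x. T (s @ [x])) \<le> T s"
  shows "T s \<le> T [] * max (1 / q) (1 / (1 - p)) ^ length s"
proof (induction s rule: rev_induct)
  case (snoc x s)
  let ?K = "max (1 / q) (1 / (1 - p))"
  have "0 \<le> (1 - q) * T (s @ [False])" "0 \<le> p * T (s @ [True])"
    using assms(1-4) by simp_all
  then have "q * T (s @ [True]) \<le> T s" "(1 - p) * T (s @ [False]) \<le> T s"
    using sm[of q s] sm[of p s] assms(1-3) by (simp_all add: E_r_def)
  then have "T (s @ [True]) \<le> 1 / q * T s" "T (s @ [False]) \<le> 1 / (1 - p) * T s"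
    using assms(1-3) by (simp_all add: field_simps)
  moreover have "1 / q * T s \<le> ?K * T s" "1 / (1 - p) * T s \<le> ?K * T s"
    by (intro mult_right_mono assms(4); simp)+
  ultimately have "T (s @ [x]) \<le> ?K * T s" by (cases x) auto
  also have "\<dots> \<le> ?K * (T [] * ?K ^ length s)"
    using snoc.IH assms(1-3) by (intro mult_left_mono) (auto simp: le_max_iff_disj)
  finally show ?case by (simp add: mult_ac)
qed simp

definition mixture :: "(nat \<Rightarrow> situation \<Rightarrow> real) \<Rightarrow> situation \<Rightarrow> real" where
  "mixture Tn s = (\<Sum>i. (1/2) ^ Suc i * Tn i s)"

context
  fixes p q :: real and Tn :: "nat \<Rightarrow> situation \<Rightarrow> real"
  assumes pq: "0 \<le> p" "p < q" "q \<le> 1"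
    and Tn_nonneg: "\<And>i s. 0 \<le> Tn i s" and Tn_Nil: "\<And>i. Tn i [] = 1"
    and Tn_sm: "\<And>i s r. r \<in> {p..q} \<Longrightarrow> E_r r (\<lambda>x. Tn i (s @ [x])) \<le> Tn i s"
begin

lemma summable_mixture: "summable (\<lambda>i. (1/2) ^ Suc i * Tn i s)"
proof (rule summable_comparison_test)
  let ?K = "max (1 / q) (1 / (1 - p))"
  show "\<exists>N. \<forall>i\<ge>N. norm ((1/2::real) ^ Suc i * Tn i s) \<le> (1/2) ^ Suc i * ?K ^ length s"
    using supermartingale_interval_le_power[OF pq Tn_nonneg Tn_sm] Tn_nonneg
    by (auto simp: Tn_Nil intro!: mult_left_mono)
  show "summable (\<lambda>i. (1/2::real) ^ Suc i * ?K ^ length s)"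
    by (intro summable_mult2 summable_mult summable_geometric) simp
qed

lemma mixture_Nil: "mixture Tn [] = 1"
  using power_half_series by (simp add: mixture_def Tn_Nil sums_iff)

lemma mixture_nonneg: "0 \<le> mixture Tn s"
  unfolding mixture_def using summable_mixture Tn_nonneg by (intro suminf_nonneg) auto

lemma mixture_ge: "(1/2) ^ Suc i * Tn i s \<le> mixture Tn s"
  unfolding mixture_def using summable_mixture Tn_nonneg
  by (intro sum_le_suminf[where I="{i}", simplified]) auto

lemma mixture_supermartingale:
  assumes "r \<in> {p..q}"
  shows "E_r r (\<lambda>x. mixture Tn (s @ [x])) \<le> mixture Tn s"
proof -
  let ?a = "\<lambda>x i. (1/2) ^ Suc i * Tn i (s @ [x])"
  have "E_r r (\<lambda>x. mixture Tn (s @ [x])) = (\<Sum>i. r * ?a True i) + (\<Sum>i. (1 - r) * ?a False i)"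
    unfolding mixture_def E_r_def by (simp only: suminf_mult[OF summable_mixture])
  also have "\<dots> = (\<Sum>i. r * ?a True i + (1 - r) * ?a False i)"
    using summable_mixture by (intro suminf_add summable_mult)
  also have "\<dots> \<le> mixture Tn s"
    unfolding mixture_def
  proof (rule suminf_le)
    fix i
    have "r * ?a True i + (1 - r) * ?a False i = (1/2) ^ Suc i * E_r r (\<lambda>x. Tn i (s @ [x]))"
      by (simp add: E_r_def distrib_left mult.left_commute)
    also have "\<dots> \<le> (1/2) ^ Suc i * Tn i s" using Tn_sm[OF assms] by (intro mult_left_mono) auto
    finally show "r * ?a True i + (1 - r) * ?a False i \<le> (1/2) ^ Suc i * Tn i s" .
    show "summable (\<lambda>i. r * ?a True i + (1 - r) * ?a False i)"
      using summable_mixture by (intro summable_add summable_mult)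
  qed (rule summable_mixture)
  finally show ?thesis .
qed

end

lemma exists_dominating_supermartingale:
  fixes TT :: "(situation \<Rightarrow> real) set"
  assumes pq: "0 \<le> p" "p < q" "q \<le> 1" and "countable TT"
    and TT: "\<And>T. T \<in> TT \<Longrightarrow>
      test_process T \<and> (\<forall>s r. r \<in> {p..q} \<longrightarrow> E_r r (\<lambda>x. T (s @ [x])) \<le> T s)"
  obtains W where "W [] = 1" "\<And>s. 0 \<le> W s" "\<And>T. T \<in> TT \<Longrightarrow> \<exists>c>0. \<forall>s. c * T s \<le> W s"
    "\<And>s r. r \<in> {p..q} \<Longrightarrow> E_r r (\<lambda>x. W (s @ [x])) \<le> W s"
proof
  define Tn where "Tn = from_nat_into (insert (\<lambda>_. 1) TT)"
  have Tn_range: "range Tn = insert (\<lambda>_. 1) TT"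
    using \<open>countable TT\<close> by (simp add: Tn_def range_from_nat_into)
  then have Tn_cases: "Tn i = (\<lambda>_. 1) \<or> Tn i \<in> TT" for i by blast
  have Tn: "0 \<le> Tn i s" "Tn i [] = 1"
    "r \<in> {p..q} \<Longrightarrow> E_r r (\<lambda>x. Tn i (s @ [x])) \<le> Tn i s" for i s r
    using Tn_cases[of i] TT[of "Tn i"] by (auto simp: test_process_def E_r_def)
  show "mixture Tn [] = 1" by (rule mixture_Nil[OF pq Tn(1,2,3)])
  show "0 \<le> mixture Tn s" for s by (rule mixture_nonneg[OF pq Tn(1,2,3)])
  show "E_r r (\<lambda>x. mixture Tn (s @ [x])) \<le> mixture Tn s" if "r \<in> {p..q}" for s r
    by (rule mixture_supermartingale[OF pq Tn(1,2,3) that])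
  show "\<exists>c>0. \<forall>s. c * T s \<le> mixture Tn s" if "T \<in> TT" for T
  proof -
    have "T \<in> range Tn" using that Tn_range by blast
    then obtain i where "T = Tn i" by blast
    then show ?thesis using mixture_ge[OF pq Tn(1,2,3)] by (intro exI[of _ "(1/2) ^ Suc i"]) auto
  qed
qed

lemma random_if_bounded:
  assumes "\<And>T. T \<in> test_supermartingales R \<phi> \<Longrightarrow> \<exists>B. \<forall>n. T (prefix \<omega> n) \<le> B"
  shows "random R \<phi> \<omega>"
proof (cases "R = R_S")
  case True
  have "\<not> 0 \<le> limsup (\<lambda>n. ereal (T (prefix \<omega> n) - \<tau> n))"
    if T: "T \<in> test_supermartingales R_S \<phi>" and \<tau>: "real_growth_function \<tau>" for T \<tau>
  proof -
    obtain B where B: "\<And>n. T (prefix \<omega> n) \<le> B" using assms T True by blast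
    have "\<not> bdd_above (range \<tau>)" "mono \<tau>" using \<tau> by (auto simp: real_growth_function_def)
    then obtain N where N: "B + 1 < \<tau> N" by (metis bdd_aboveI2 linorder_not_le)
    have "\<forall>\<^sub>F n in sequentially. ereal (T (prefix \<omega> n) - \<tau> n) \<le> ereal (-1)"
    proof (rule eventually_sequentiallyI)
      fix n assume "N \<le> n"
      then have "\<tau> N \<le> \<tau> n" using \<open>mono \<tau>\<close> by (simp add: mono_def)
      then show "ereal (T (prefix \<omega> n) - \<tau> n) \<le> ereal (-1)" using B[of n] N by simp
    qed
    then have "limsup (\<lambda>n. ereal (T (prefix \<omega> n) - \<tau> n)) \<le> ereal (-1)" by (rule Limsup_bounded)
    moreover have "\<not> (0::ereal) \<le> ereal (-1)" by simp
    ultimately show ?thesis by (meson order.trans)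
  qed
  then show ?thesis using True by (auto simp: random_def)
next
  case False
  have "limsup (\<lambda>n. ereal (T (prefix \<omega> n))) \<noteq> \<infinity>" if T: "T \<in> test_supermartingales R \<phi>" for T
  proof -
    obtain B where "\<And>n. T (prefix \<omega> n) \<le> B" using assms T by blast
    then have "limsup (\<lambda>n. ereal (T (prefix \<omega> n))) \<le> B" by (intro Limsup_bounded) auto
    then show ?thesis by auto
  qed
  then show ?thesis using False by (auto simp: random_def)
qed

lemma real_growth_function_linear:
  assumes "0 < M"
  shows "real_growth_function (\<lambda>n. real n / real M)"
  unfolding real_growth_function_def
proof (intro conjI)
  have "recursive_rat2 id (\<lambda>d n. real (id d) / real ((\<lambda>_. M) d))"
    using assms by (intro recursive_rat2_quotient recursive_proj recursive_const) auto
  then show "computable_real id (\<lambda>n. real n / real M)"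
    unfolding computable_real_def by (intro exI[of _ "\<lambda>d n. real d / real M"]) simp
  show "mono (\<lambda>n. real n / real M)" by (auto simp: mono_def divide_right_mono)
  show "\<forall>n. 0 \<le> real n / real M" by simp
  show "\<not> bdd_above (range (\<lambda>n. real n / real M))"
  proof
    assume "bdd_above (range (\<lambda>n. real n / real M))"
    then obtain B where "\<And>n. real n / real M \<le> B" by (auto simp: bdd_above_def)
    moreover obtain n :: nat where "B * M < n" using reals_Archimedean2 by blast
    then have "B < real n / real M" using assms by (simp add: field_simps)
    ultimately show False by (meson not_le)
  qed
qed

lemma not_random_if_linear_growth:
  assumes S: "S \<in> test_supermartingales R \<phi>" and "0 < d"
    and grow: "\<And>n. real n * d \<le> S (prefix \<omega> n)"
  shows "\<not> random R \<phi> \<omega>"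
proof (cases "R = R_S")
  case True
  define M where "M = nat \<lceil>1 / d\<rceil> + 1"
  have "0 < M" by (simp add: M_def)
  have "1 / d \<le> real M" unfolding M_def by linarith
  then have "1 / real M \<le> d" using \<open>0 < d\<close> \<open>0 < M\<close> by (simp add: field_simps)
  then have "real n / real M \<le> S (prefix \<omega> n)" for n
    using grow[of n] mult_left_mono[of "1 / real M" d "real n"] by simp
  then have "0 \<le> limsup (\<lambda>n. ereal (S (prefix \<omega> n) - real n / real M))"
    by (intro le_Limsup) (auto simp: zero_ereal_def)
  then show ?thesis
    using True S real_growth_function_linear[OF \<open>0 < M\<close>] by (auto simp: random_def)
next
  case False
  have "limsup (\<lambda>n. ereal (S (prefix \<omega> n))) = \<infinity>"
  proof (rule ereal_top)
    fix B :: real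
    obtain N :: nat where N: "B / d < N" using reals_Archimedean2 by blast
    have "\<forall>\<^sub>F n in sequentially. ereal B \<le> ereal (S (prefix \<omega> n))"
    proof (rule eventually_sequentiallyI)
      fix n assume "N \<le> n"
      then have "real N * d \<le> real n * d" using \<open>0 < d\<close> by simp
      moreover have "B < real N * d" using N \<open>0 < d\<close> by (simp add: field_simps)
      ultimately have "B \<le> real n * d" by linarith
      then show "ereal B \<le> ereal (S (prefix \<omega> n))" using grow[of n] by simp
    qed
    then show "ereal B \<le> limsup (\<lambda>n. ereal (S (prefix \<omega> n)))" by (intro le_Limsup) auto
  qed
  then show ?thesis using False S by (auto simp: random_def)
qed

lemma exists_random_path_below:
  fixes \<psi> V :: "situation \<Rightarrow> real"
  assumes pq: "0 \<le> p" "p < q" "q \<le> 1" and \<psi>: "\<And>s. \<psi> s \<in> {p..q}"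
    and V: "\<And>s. 0 \<le> V s" "V [] = 1" "\<And>s. E_r (\<psi> s) (\<lambda>x. V (s @ [x])) \<le> V s"
  obtains \<omega> where "random R (\<lambda>_. {p..q}) \<omega>" "\<And>n. V (prefix \<omega> n) \<le> 2"
proof -
  let ?TT = "test_supermartingales R (\<lambda>_. {p..q})"
  have "test_process T \<and> (\<forall>s r. r \<in> {p..q} \<longrightarrow> E_r r (\<lambda>x. T (s @ [x])) \<le> T s)" if "T \<in> ?TT" for T
    using that pq supermartingale_intervalD[of p q T] by (auto simp: test_supermartingales_def)
  then obtain W where W: "W [] = 1" "\<And>s. 0 \<le> W s" "\<And>T. T \<in> ?TT \<Longrightarrow> \<exists>c>0. \<forall>s. c * T s \<le> W s"
      "\<And>s r. r \<in> {p..q} \<Longrightarrow> E_r r (\<lambda>x. W (s @ [x])) \<le> W s"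
    using exists_dominating_supermartingale[OF pq countable_test_supermartingales] by blast
  have "\<exists>x. W (s @ [x]) + V (s @ [x]) \<le> W s + V s" for s
  proof -
    have "0 \<le> \<psi> s" "\<psi> s \<le> 1" using \<psi>[of s] pq by auto
    then obtain x where "W (s @ [x]) + V (s @ [x]) \<le> E_r (\<psi> s) (\<lambda>x. W (s @ [x]) + V (s @ [x]))"
      using ex_le_E_r[of "\<psi> s" "\<lambda>x. W (s @ [x]) + V (s @ [x])"] by auto
    also have "\<dots> = E_r (\<psi> s) (\<lambda>x. W (s @ [x])) + E_r (\<psi> s) (\<lambda>x. V (s @ [x]))"
      by (simp add: E_r_def algebra_simps)
    also have "\<dots> \<le> W s + V s" using W(4)[OF \<psi>] V(3) by (rule add_mono)
    finally show ?thesis by blast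
  qed
  then obtain \<omega> where \<omega>: "\<And>n. W (prefix \<omega> n) + V (prefix \<omega> n) \<le> 2"
    using exists_path_nonincreasing[of "\<lambda>s. W s + V s"] W(1) V(2) by auto
  show thesis
  proof
    show "random R (\<lambda>_. {p..q}) \<omega>"
    proof (rule random_if_bounded)
      fix T assume "T \<in> ?TT"
      then obtain c where c: "c > 0" "\<And>s. c * T s \<le> W s" using W(3) by blast
      have "c * T (prefix \<omega> n) \<le> 2" for n
        using c(2)[of "prefix \<omega> n"] \<omega>[of n] V(1)[of "prefix \<omega> n"] by linarith
      then have "T (prefix \<omega> n) \<le> 2 / c" for n using c(1) by (simp add: field_simps mult.commute)
      then show "\<exists>B. \<forall>n. T (prefix \<omega> n) \<le> B" by blast
    qed
    show "V (prefix \<omega> n) \<le> 2" for n using \<omega>[of n] W(2)[of "prefix \<omega> n"] by linarith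
  qed
qed

section \<open>Betting on a recursive splitter\<close>

definition odds_num :: "nat \<Rightarrow> nat \<Rightarrow> nat \<Rightarrow> nat" where
  "odds_num n a k = (if k = 0 then n - a else a)"

definition odds_bet :: "real \<Rightarrow> real \<Rightarrow> real \<Rightarrow> bool \<Rightarrow> real" where
  "odds_bet n a b x = (if x then b / a else (n - b) / (n - a))"

lemma E_r_odds_bet:
  "0 < a \<Longrightarrow> a < n \<Longrightarrow> E_r r (odds_bet n a b) = 1 + (b - a) * (r * n - a) / (a * (n - a))"
  by (simp add: E_r_def odds_bet_def field_simps)

lemma E_r_odds_bet_le_1:
  "0 < a \<Longrightarrow> a < n \<Longrightarrow> (b - a) * (r * n - a) \<le> 0 \<Longrightarrow> E_r r (odds_bet n a b) \<le> 1"
  by (simp add: E_r_odds_bet divide_nonpos_pos)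

lemma E_r_odds_bet_less_1:
  "0 < a \<Longrightarrow> a < n \<Longrightarrow> (b - a) * (r * n - a) < 0 \<Longrightarrow> E_r r (odds_bet n a b) < 1"
  by (simp add: E_r_odds_bet divide_neg_pos)

lemma odds_bet_pos: "0 < a \<Longrightarrow> a < n \<Longrightarrow> 0 < b \<Longrightarrow> b < n \<Longrightarrow> 0 < odds_bet n a b x"
  by (simp add: odds_bet_def)

lemma inverse_odds_bet:
  "0 < a \<Longrightarrow> a < n \<Longrightarrow> 0 < b \<Longrightarrow> b < n \<Longrightarrow> 1 / odds_bet n a b x = odds_bet n b a x"
  by (simp add: odds_bet_def)

lemma odds_bet_of_nat:
  "a \<le> n \<Longrightarrow> b \<le> n \<Longrightarrow>
   odds_bet (real n) (real a) (real b) x = real (odds_num n b (of_bool x)) / real (odds_num n a (of_bool x))"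
  by (simp add: odds_bet_def odds_num_def of_nat_diff)

lemma generated_Nil [simp]: "generated D [] = 1"
  by (simp add: generated_def)

lemma generated_snoc: "generated D (s @ [x]) = generated D s * D s x"
proof -
  have "(\<Prod>i<length s. D (take i (s @ [x])) ((s @ [x]) ! i)) = generated D s"
    unfolding generated_def by (intro prod.cong) (auto simp: nth_append)
  then show ?thesis by (simp add: generated_def prod.lessThan_Suc)
qed

definition recursive_splitter :: "fsys \<Rightarrow> (nat \<Rightarrow> nat) \<Rightarrow> real \<Rightarrow> real \<Rightarrow> bool" where
  "recursive_splitter \<phi> c l u \<longleftrightarrow> recursive 1 (\<lambda>xs. c (xs ! 0)) \<and>
     (\<forall>s. if c (enc_sit s) = 0 then l \<le> lower_fs \<phi> s else lower_fs \<phi> s \<le> u)"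

locale splitter_bets =
  fixes \<phi> :: fsys and c :: "nat \<Rightarrow> nat" and p q :: real and N a1 a2 a3 a4 :: nat
  assumes precise: "precise \<phi>"
    and splitter: "recursive_splitter \<phi> c (a2 / N) (a3 / N)"
    and p: "0 \<le> p" "p < a1 / N" and levels: "a1 < a2" "a2 \<le> a3" "a3 < a4"
    and q: "a4 / N < q" "q \<le> 1"
begin

lemma N_pos: "0 < N" and a1_pos: "0 < a1" and a4_less: "a4 < N"
proof -
  show "0 < N" "0 < a1" using p by (auto intro: ccontr)
  have "real a4 / N < 1" using q by linarith
  with \<open>0 < N\<close> show "a4 < N" by simp
qed

lemma p_less_q: "p < q"
proof -
  have "real a1 / N \<le> real a4 / N" using levels by (simp add: divide_right_mono)
  then show ?thesis using p q by linarith
qed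

definition base :: "nat \<Rightarrow> nat" where
  "base e = (if c e = 0 then a2 else a3)"

definition target :: "nat \<Rightarrow> nat" where
  "target e = (if c e = 0 then a1 else a4)"

definition bet :: "situation \<Rightarrow> bool \<Rightarrow> real" where
  "bet s = odds_bet N (base (enc_sit s)) (target (enc_sit s))"

definition S :: "situation \<Rightarrow> real" where
  "S = generated bet"

lemma base_target_bounds: "0 < base e" "base e < N" "0 < target e" "target e < N"
  using a1_pos a4_less levels by (auto simp: base_def target_def)

lemma bet_pos: "0 < bet s x"
  using base_target_bounds by (simp add: bet_def odds_bet_pos)

lemma S_snoc: "S (s @ [x]) = S s * bet s x"
  by (simp add: S_def generated_snoc)

lemma S_pos: "0 < S s"
  by (induction s rule: rev_induct) (simp_all add: S_snoc bet_pos, simp add: S_def)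

lemma E_r_bet_le_1: "E_r (lower_fs \<phi> s) (bet s) \<le> 1"
proof -
  let ?r = "lower_fs \<phi> s"
  have split: "if c (enc_sit s) = 0 then a2 / N \<le> ?r else ?r \<le> a3 / N"
    using splitter by (simp add: recursive_splitter_def)
  have "(real (target (enc_sit s)) - base (enc_sit s)) * (?r * N - base (enc_sit s)) \<le> 0"
  proof (cases "c (enc_sit s) = 0")
    case True
    then have "a2 \<le> ?r * N" using split N_pos by (simp add: pos_divide_le_eq)
    with True levels show ?thesis by (simp add: base_def target_def mult_nonpos_nonneg)
  next
    case False
    then have "?r * N \<le> a3" using split N_pos by (simp add: pos_le_divide_eq)
    with False levels show ?thesis by (simp add: base_def target_def mult_nonneg_nonpos)
  qed
  then show ?thesis using base_target_bounds unfolding bet_def by (intro E_r_odds_bet_le_1) auto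
qed

lemma S_supermartingale: "supermartingale \<phi> S"
proof -
  have \<phi>: "\<phi> s = {lower_fs \<phi> s}" for s
  proof -
    obtain r where "\<phi> s = {r}" using precise by (auto simp: precise_def)
    then show ?thesis by (simp add: lower_fs_def)
  qed
  have "E_r (lower_fs \<phi> s) (\<lambda>x. S (s @ [x])) = S s * E_r (lower_fs \<phi> s) (bet s)" for s
    by (simp add: S_snoc E_r_def algebra_simps)
  also have "\<dots> s \<le> S s" for s
    using mult_left_mono[OF E_r_bet_le_1 less_imp_le[OF S_pos]] by simp
  finally show ?thesis by (simp add: supermartingale_precise_iff[OF \<phi>])
qed

lemma recursive_odds_num:
  assumes "recursive 1 (\<lambda>xs. a (xs ! 0))"
  shows "recursive 2 (\<lambda>xs. odds_num N (a (xs ! 0)) (xs ! 1))"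
proof -
  have "recursive 2 (\<lambda>xs. a (xs ! 0))"
    using recursive_comp1[OF assms recursive_proj[of 0 2]] by simp
  then show ?thesis unfolding odds_num_def
    by (intro recursive_if_zero recursive_diff recursive_const recursive_proj) auto
qed

lemma recursive_base: "recursive 1 (\<lambda>xs. base (xs ! 0))"
  and recursive_target: "recursive 1 (\<lambda>xs. target (xs ! 0))"
  using splitter unfolding base_def target_def recursive_splitter_def
  by (auto intro!: recursive_if_zero recursive_const)

lemma odds_num_pos: "0 < odds_num N (base e) k" "0 < odds_num N (target e) k"
  using base_target_bounds by (auto simp: odds_num_def)

lemma bet_eq:
  "bet s x = real (odds_num N (target (enc_sit s)) (of_bool x)) / real (odds_num N (base (enc_sit s)) (of_bool x))"
  using base_target_bounds by (simp add: bet_def odds_bet_of_nat less_imp_le)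

lemma S_eq:
  "S s = real (sit_prod (\<lambda>e. odds_num N (target e)) (enc_sit s)) /
         real (sit_prod (\<lambda>e. odds_num N (base e)) (enc_sit s))"
  by (simp add: S_def generated_def bet_eq sit_prod_enc_sit prod_dividef)

lemma lower_semicomputable_bet: "lower_semicomputable enc_sit_bool (\<lambda>d. bet (fst d) (snd d))"
proof -
  let ?dec = "\<lambda>xs. fst (prod_decode (xs ! 0))" and ?bit = "\<lambda>xs. snd (prod_decode (xs ! 0))"
  have dec: "recursive 1 ?dec" "recursive 1 ?bit"
    by (intro recursive_prod_decode recursive_proj; simp)+
  have "recursive 1 (\<lambda>xs. odds_num N (a (?dec xs)) (?bit xs))"
    if "recursive 1 (\<lambda>xs. a (xs ! 0))" for a
    using recursive_comp2[OF recursive_odds_num[OF that] dec] by simp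
  from lower_semicomputable_quotient[OF this[OF recursive_target] this[OF recursive_base] odds_num_pos(1),
      of enc_sit_bool]
  show ?thesis by (simp add: enc_sit_bool_def bet_eq of_bool_def)
qed

lemma S_in_F_class: "S \<in> F_class R"
proof -
  have num: "recursive 1 (\<lambda>xs. sit_prod (\<lambda>e. odds_num N (target e)) (xs ! 0))"
    and den: "recursive 1 (\<lambda>xs. sit_prod (\<lambda>e. odds_num N (base e)) (xs ! 0))"
    by (intro recursive_sit_prod recursive_odds_num recursive_base recursive_target)+
  have den_pos: "0 < sit_prod (\<lambda>e. odds_num N (base e)) e" for e
    using odds_num_pos by (simp add: sit_prod_def)
  have test: "test_process S" using S_pos by (simp add: test_process_def less_imp_le S_def)
  show ?thesis
  proof (cases R)
    case R_ML
    then show ?thesis using test lower_semicomputable_quotient[OF num den den_pos, of enc_sit]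
      by (simp add: F_class_def S_eq[abs_def])
  next
    case R_wML
    then show ?thesis using lower_semicomputable_bet bet_pos
      by (auto simp: F_class_def S_def intro!: exI[of _ bet] less_imp_le)
  qed (use test S_pos recursive_rat_quotient[OF num den den_pos, of enc_sit] in
        \<open>simp_all add: F_class_def S_eq[abs_def]\<close>)
qed

lemma S_test_supermartingale: "S \<in> test_supermartingales R \<phi>"
  using S_in_F_class S_supermartingale S_pos
  by (simp add: test_supermartingales_def test_process_def less_imp_le S_def)

(* The endpoint of [p, q] beyond the target of the bet: against it the bet loses at rate \<theta>. *)
definition \<psi> :: "situation \<Rightarrow> real" where
  "\<psi> s = (if c (enc_sit s) = 0 then p else q)"

definition \<theta> :: real where
  "\<theta> = max (E_r p (odds_bet N a1 a2)) (E_r q (odds_bet N a4 a3))"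

definition V :: "situation \<Rightarrow> real" where
  "V s = (1 / \<theta>) ^ length s / S s"

lemma \<theta>_pos: "0 < \<theta>" and \<theta>_less_1: "\<theta> < 1"
proof -
  have "0 < odds_bet N a4 a3 x" for x using a1_pos a4_less levels by (intro odds_bet_pos) auto
  then have "0 < E_r q (odds_bet N a4 a3)" using p_less_q p q by (intro E_r_pos) auto
  then show "0 < \<theta>" by (simp add: \<theta>_def)
  have "p * N < a1" "a4 < q * N" using p q N_pos by (simp_all add: field_simps)
  then have "E_r p (odds_bet N a1 a2) < 1" "E_r q (odds_bet N a4 a3) < 1"
    using a1_pos a4_less levels
    by (auto intro!: E_r_odds_bet_less_1 simp: mult_pos_neg mult_neg_pos)
  then show "\<theta> < 1" by (simp add: \<theta>_def)
qed

lemma E_r_inverse_bet: "E_r (\<psi> s) (\<lambda>x. 1 / bet s x) \<le> \<theta>"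
  using base_target_bounds
  by (auto simp: \<psi>_def \<theta>_def bet_def inverse_odds_bet base_def target_def split: if_splits)

lemma V_supermartingale: "E_r (\<psi> s) (\<lambda>x. V (s @ [x])) \<le> V s"
proof -
  have "E_r (\<psi> s) (\<lambda>x. V (s @ [x])) = (1 / \<theta>) ^ Suc (length s) / S s * E_r (\<psi> s) (\<lambda>x. 1 / bet s x)"
    by (simp add: E_r_def V_def S_snoc algebra_simps)
  also have "\<dots> \<le> (1 / \<theta>) ^ Suc (length s) / S s * \<theta>"
    using E_r_inverse_bet S_pos[of s] \<theta>_pos by (intro mult_left_mono) auto
  also have "\<dots> = V s" using \<theta>_pos by (simp add: V_def)
  finally show ?thesis .
qed

lemma exists_interval_random_not_random:
  obtains \<omega> where "random R (\<lambda>_. {p..q}) \<omega>" "\<not> random R \<phi> \<omega>"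
proof -
  have \<psi>: "\<psi> s \<in> {p..q}" and V_nonneg: "0 \<le> V s" for s
    using p_less_q S_pos[of s] \<theta>_pos by (auto simp: \<psi>_def V_def)
  have "V [] = 1" by (simp add: V_def S_def)
  then obtain \<omega> where random: "random R (\<lambda>_. {p..q}) \<omega>" and V: "\<And>n. V (prefix \<omega> n) \<le> 2"
    using exists_random_path_below[OF p(1) p_less_q q(2) \<psi> V_nonneg _ V_supermartingale] by blast
  define d where "d = (1 / \<theta> - 1) / 2"
  have "0 < d" using \<theta>_less_1 \<theta>_pos by (simp add: d_def)
  have "real n * d \<le> S (prefix \<omega> n)" for n
  proof -
    have "1 + real n * (1 / \<theta> - 1) \<le> (1 + (1 / \<theta> - 1)) ^ n"
      using \<theta>_pos by (intro Bernoulli_inequality) simp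
    also have "\<dots> \<le> 2 * S (prefix \<omega> n)"
      using V[of n] S_pos[of "prefix \<omega> n"] by (simp add: V_def divide_le_eq)
    finally show ?thesis by (simp add: d_def)
  qed
  with \<open>0 < d\<close> have "\<not> random R \<phi> \<omega>" by (rule not_random_if_linear_growth[OF S_test_supermartingale])
  with random show thesis by (rule that)
qed

lemma Omega_R_ne: "Omega_R R \<phi> \<noteq> Omega_R R (\<lambda>_. {p..q})"
  using exists_interval_random_not_random by (metis Omega_R_def mem_Collect_eq)

end

section \<open>Recursive splitters of computable and stationary forecasts\<close>

lemma rat_code_le_iff:
  assumes "0 < n"
  shows "rat_code a b c \<le> real m / real n \<longleftrightarrow> a * n \<le> m * (c + 1) + b * n"
proof -
  have "rat_code a b c \<le> real m / real n \<longleftrightarrow> real (a * n) \<le> real (m * (c + 1) + b * n)"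
    using assms by (simp add: rat_code_def field_simps)
  then show ?thesis by (simp only: of_nat_le_iff)
qed

lemma powr_minus_le_inverse:
  assumes "0 < n"
  shows "2 powr (- real n) \<le> 1 / real n"
proof -
  have "real n \<le> 2 powr real n" using less_exp[of n] by (simp add: powr_realpow)
  with assms show ?thesis by (simp add: powr_minus field_simps)
qed

lemma exists_fine_grid:
  fixes l u :: real and j :: nat
  assumes "0 \<le> l" "l < u"
  obtains n m :: nat where "l < real m / n" "real (m + j) / n < u"
proof -
  obtain n :: nat where "(j + 1) / (u - l) < n" using reals_Archimedean2 by blast
  moreover have "0 < (j + 1) / (u - l)" using assms by simp
  ultimately have "j + 1 < (u - l) * n" using assms by (simp add: pos_divide_less_eq mult.commute)
  then have "0 < n" by (cases n) auto
  define m where "m = nat \<lfloor>l * n\<rfloor> + 1"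
  have "real m = \<lfloor>l * n\<rfloor> + 1" using assms by (simp add: m_def)
  then have "l * n < real m" "real m \<le> l * n + 1"
    using real_of_int_floor_add_one_gt[of "l * n"] of_int_floor_le[of "l * n"] by linarith+
  then have "l * n < real m" "real (m + j) < u * n"
    using \<open>j + 1 < (u - l) * n\<close> by (simp_all add: algebra_simps)
  with \<open>0 < n\<close> show thesis by (intro that[where n=n and m=m]) (simp_all add: field_simps)
qed

lemma recursive_rat2_less_decidable:
  assumes "recursive_rat2 enc q" "0 < n"
  obtains c where "recursive 1 (\<lambda>xs. c (xs ! 0))" "\<And>d. c (enc d) = 0 \<longleftrightarrow> real m / n < q d n"
proof -
  obtain A B C where ABC: "recfn 2 A" "recfn 2 B" "recfn 2 C"
    and q: "\<And>d k. q d k = rat_code (A [enc d, k]) (B [enc d, k]) (C [enc d, k])"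
    using assms(1) by (auto simp: recursive_rat2_def)
  define c :: "nat \<Rightarrow> nat"
    where "c e = (if A [e, n] * n \<le> m * (C [e, n] + 1) + B [e, n] * n then 1 else 0)" for e
  have proj: "recursive 1 (\<lambda>xs. xs ! 0)" by (rule recursive_proj) simp
  have "recursive 1 (\<lambda>xs. F [xs ! 0, n])" if "recfn 2 F" for F
  proof -
    have "recursive 2 F" using that by (auto simp: recursive_def)
    from recursive_comp2[OF this proj recursive_const] show ?thesis .
  qed
  then have "recursive 1 (\<lambda>xs. c (xs ! 0))"
    unfolding c_def using ABC by (intro recursive_if_le recursive_add recursive_mult recursive_const) auto
  moreover have "c (enc d) = 0 \<longleftrightarrow> real m / n < q d n" for d
    unfolding c_def q rat_code_le_iff[OF assms(2), symmetric] by auto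
  ultimately show thesis by (rule that)
qed

lemma computable_fs_splitter:
  assumes "computable_fs \<phi>" "0 \<le> l" "l < u"
  obtains c where "recursive_splitter \<phi> c l u"
proof -
  obtain n m :: nat where grid: "l < real m / n" "real (m + 2) / n < u"
    using exists_fine_grid[OF assms(2,3)] .
  then have "0 < n" using assms(2) by (auto intro: ccontr)
  obtain q where "recursive_rat2 enc_sit q" and q: "\<And>d k. \<bar>lower_fs \<phi> d - q d k\<bar> < 2 powr (- real k)"
    using assms(1) by (auto simp: computable_fs_def computable_real_def)
  then obtain c where c: "recursive 1 (\<lambda>xs. c (xs ! 0))"
    and c0: "\<And>d. c (enc_sit d) = 0 \<longleftrightarrow> real (m + 1) / n < q d n"
    using recursive_rat2_less_decidable \<open>0 < n\<close> by blast
  have "if c (enc_sit s) = 0 then l \<le> lower_fs \<phi> s else lower_fs \<phi> s \<le> u" for s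
  proof -
    have "\<bar>lower_fs \<phi> s - q s n\<bar> < 1 / n"
      using less_le_trans[OF q[of s n] powr_minus_le_inverse[OF \<open>0 < n\<close>]] .
    then have lower: "q s n - 1 / n < lower_fs \<phi> s" and upper: "lower_fs \<phi> s < q s n + 1 / n"
      unfolding abs_less_iff by linarith+
    have m: "real m / n = real (m + 1) / n - 1 / n" "real (m + 2) / n = real (m + 1) / n + 1 / n"
      by (simp_all add: diff_divide_distrib add_divide_distrib)
    show ?thesis
    proof (cases "c (enc_sit s) = 0")
      case True
      with c0 have "real (m + 1) / n < q s n" by blast
      with True lower grid(1) m(1) show ?thesis by simp
    next
      case False
      with c0 have "q s n \<le> real (m + 1) / n" by simp
      with False upper grid(2) m(2) show ?thesis by simp
    qed
  qed
  with c have "recursive_splitter \<phi> c l u" unfolding recursive_splitter_def by blast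
  then show thesis by (rule that)
qed

lemma stationary_splitter:
  assumes "stationary \<phi>" "l \<le> u"
  obtains c where "recursive_splitter \<phi> c l u"
proof -
  obtain I where "\<And>s. \<phi> s = I" using assms(1) by (auto simp: stationary_def)
  then have "lower_fs \<phi> s = Inf I" for s by (simp add: lower_fs_def)
  then have "recursive_splitter \<phi> (\<lambda>_. if l \<le> Inf I then 0 else 1) l u"
    using assms(2) by (auto simp: recursive_splitter_def intro: recursive_const)
  then show thesis by (rule that)
qed

theorem corollary13:
  fixes R :: rnotion and \<phi> :: fsys and p q :: real
  assumes "forecasting_system \<phi>" and "precise \<phi>"
    and "0 \<le> p" and "p < q" and "q \<le> 1"
    and "Omega_R R \<phi> = Omega_R R (\<lambda>_. {p..q})"
  shows "\<not> computable_fs \<phi> \<and> \<not> stationary \<phi>"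
proof -
  obtain N m :: nat where grid: "p < real m / N" "real (m + 4) / N < q"
    using exists_fine_grid[OF assms(3,4)] .
  have no_splitter: "\<not> recursive_splitter \<phi> c (real (m + 1) / N) (real (m + 3) / N)" for c
  proof
    assume "recursive_splitter \<phi> c (real (m + 1) / N) (real (m + 3) / N)"
    then interpret splitter_bets \<phi> c p q N m "m + 1" "m + 3" "m + 4"
      using assms grid by unfold_locales auto
    show False using Omega_R_ne assms(6) by blast
  qed
  have "0 < N" using grid assms(3) by (auto intro: ccontr)
  then have levels: "0 \<le> real (m + 1) / N" "real (m + 1) / N < real (m + 3) / N"
    by (simp_all add: divide_strict_right_mono)
  have "\<not> computable_fs \<phi>" using computable_fs_splitter[OF _ levels] no_splitter by blast
  moreover have "\<not> stationary \<phi>"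
    using stationary_splitter[OF _ less_imp_le[OF levels(2)]] no_splitter by blast
  ultimately show ?thesis ..
qed

end
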